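(* Let $(E,P,\vartheta)$ be a complete bipolar metric space and let $F\colon E\cup P\to E\cup P$ with $F(E)\subseteq E$, $F(P)\subseteq P$ be a polynomial contraction, i.e. there exist $\pi\in(0,1)$, an integer $\sigma\geq1$ and functions $q_\upsilon\colon E\times P\to[0,\infty)$, $\upsilon=0,\dots,\sigma$, such that $$\sum_{\upsilon=0}^{\sigma} q_\upsilon(Fe,Ff)\,\vartheta^\upsilon(Fe,Ff)\leq \pi\sum_{\upsilon=0}^{\sigma} q_\upsilon(e,f)\,\vartheta^\upsilon(e,f)\quad\text{for all } e\in E,\ f\in P.$$ Assume (i) $F$ is Picard-continuous, and (ii) there exist $\varrho\in\{1,\dots,\sigma\}$ and $Q_\varrho>0$ with $q_\varrho(e,f)\geq Q_\varrho$ for all $e\in E$, $f\in P$. Then $F$ has a unique fixed point.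
   Context: A bipolar metric space is a triple $(E,P,\vartheta)$ where $E,P$ are nonempty sets and $\vartheta\colon E\times P\to[0,\infty)$ satisfies: (1) for $e\in E$, $f\in P$, $\vartheta(e,f)=0$ iff $e=f$; (2) $\vartheta(e,f)=\vartheta(f,e)$ whenever $e,f\in E\cap P$; (3) $\vartheta(e,f)\leq\vartheta(e,z)+\vartheta(r,z)+\vartheta(r,f)$ for all $e,r\in E$, $z,f\in P$. A sequence $(x_n)$ in $E$ converges to $y\in P$ if $\vartheta(x_n,y)\to0$; a sequence $(y_n)$ in $P$ converges to $x\in E$ if $\vartheta(x,y_n)\to0$. A bisequence $(x_n,y_n)$ with $x_n\in E$, $y_n\in P$ is Cauchy if for every $\varepsilon>0$ there is $N$ with $\vartheta(x_n,y_m)<\varepsilon$ for all $n,m\geq N$; the space is complete if every Cauchy bisequence is convergent. $F$ is Picard-continuous if for all $g\in E$, $h\in P$: $\lim_{n\to\infty}\vartheta(F^n g,h)=0$ implies $\lim_{n\to\infty}\vartheta(F(F^ng),Fh)=0$, where $F^0g=g$, $F^{n+1}g=F(F^ng)$. $\vartheta^\upsilon$ denotes the $\upsilon$-th power of $\vartheta$, with $\vartheta^0\equiv1$. A fixed point of $F$ is a point $g$ with $Fg=g$. *)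

theory Defs
  imports "HOL-Analysis.Analysis"
begin

definition bipolar_metric_space :: "'a set \<Rightarrow> 'a set \<Rightarrow> ('a \<Rightarrow> 'a \<Rightarrow> real) \<Rightarrow> bool" where
  "bipolar_metric_space E P d \<longleftrightarrow>
     E \<noteq> {} \<and> P \<noteq> {} \<and>
     (\<forall>e\<in>E. \<forall>f\<in>P. d e f \<ge> 0) \<and>
     (\<forall>e\<in>E. \<forall>f\<in>P. d e f = 0 \<longleftrightarrow> e = f) \<and>
     (\<forall>e\<in>E \<inter> P. \<forall>f\<in>E \<inter> P. d e f = d f e) \<and>
     (\<forall>e\<in>E. \<forall>r\<in>E. \<forall>z\<in>P. \<forall>f\<in>P. d e f \<le> d e z + d r z + d r f)"

definition bp_conv_left :: "('a \<Rightarrow> 'a \<Rightarrow> real) \<Rightarrow> (nat \<Rightarrow> 'a) \<Rightarrow> 'a \<Rightarrow> bool" where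
  "bp_conv_left d x y \<longleftrightarrow> (\<lambda>n. d (x n) y) \<longlonglongrightarrow> 0"

definition bp_conv_right :: "('a \<Rightarrow> 'a \<Rightarrow> real) \<Rightarrow> (nat \<Rightarrow> 'a) \<Rightarrow> 'a \<Rightarrow> bool" where
  "bp_conv_right d y x \<longleftrightarrow> (\<lambda>n. d x (y n)) \<longlonglongrightarrow> 0"

definition bp_cauchy :: "('a \<Rightarrow> 'a \<Rightarrow> real) \<Rightarrow> (nat \<Rightarrow> 'a) \<Rightarrow> (nat \<Rightarrow> 'a) \<Rightarrow> bool" where
  "bp_cauchy d x y \<longleftrightarrow> (\<forall>\<epsilon>>0. \<exists>N. \<forall>n\<ge>N. \<forall>m\<ge>N. d (x n) (y m) < \<epsilon>)"

definition bp_convergent_biseq :: "'a set \<Rightarrow> 'a set \<Rightarrow> ('a \<Rightarrow> 'a \<Rightarrow> real) \<Rightarrow> (nat \<Rightarrow> 'a) \<Rightarrow> (nat \<Rightarrow> 'a) \<Rightarrow> bool" where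
  "bp_convergent_biseq E P d x y \<longleftrightarrow>
     (\<exists>v\<in>P. bp_conv_left d x v) \<and> (\<exists>u\<in>E. bp_conv_right d y u)"

definition bp_complete :: "'a set \<Rightarrow> 'a set \<Rightarrow> ('a \<Rightarrow> 'a \<Rightarrow> real) \<Rightarrow> bool" where
  "bp_complete E P d \<longleftrightarrow>
     (\<forall>x y. (\<forall>n. x n \<in> E) \<longrightarrow> (\<forall>n. y n \<in> P) \<longrightarrow> bp_cauchy d x y \<longrightarrow> bp_convergent_biseq E P d x y)"

definition picard_continuous :: "'a set \<Rightarrow> 'a set \<Rightarrow> ('a \<Rightarrow> 'a \<Rightarrow> real) \<Rightarrow> ('a \<Rightarrow> 'a) \<Rightarrow> bool" where
  "picard_continuous E P d F \<longleftrightarrow>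
     (\<forall>g\<in>E. \<forall>h\<in>P. (\<lambda>n. d ((F ^^ n) g) h) \<longlonglongrightarrow> 0 \<longrightarrow>
        (\<lambda>n. d (F ((F ^^ n) g)) (F h)) \<longlonglongrightarrow> 0)"

end

theory Submission
  imports Defs
begin

text \<open>Along the Picard iterates of e \<in> E and f \<in> P the weighted sum
  S(e,f) = \<Sum>v. q v e f * d(e,f)^v shrinks at least like \<pi>^k, and it dominates Q * d(e,f)^\<rho>;
  so the distances of the iterates decay geometrically with ratio root \<rho> \<pi> and are summable.
  By the quadrangle inequality, summable one-step distances make the iterates a Cauchy
  bisequence, and completeness together with Picard-continuity yields a fixed point in E \<inter> P.
  Fixed points e \<in> E, f \<in> P have constant iterate distance d(e,f), which is summable only
  if it vanishes.\<close>

lemma funpow_in_invariant: "f ` A \<subseteq> A \<Longrightarrow> a \<in> A \<Longrightarrow> (f ^^ n) a \<in> A"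
  by (induction n) (simp_all add: image_subset_iff)

lemma sum_ivl_le_suminf_tail:
  fixes s :: "nat \<Rightarrow> real"
  assumes "summable s" "\<And>k. 0 \<le> s k"
  shows "(\<Sum>k=n..<m. s k) \<le> (\<Sum>i. s (i + n))"
proof -
  have "(\<Sum>k=n..<m. s k) = (\<Sum>i=0..<m - n. s (i + n))"
    unfolding sum.atLeastLessThan_shift_0[of _ n m] by (simp add: add.commute)
  also have "\<dots> \<le> (\<Sum>i. s (i + n))"
    by (rule sum_le_suminf) (simp_all add: assms summable_ignore_initial_segment)
  finally show ?thesis .
qed

lemma coeff_mult_power_le_sum:
  fixes c :: "nat \<Rightarrow> real"
  assumes "\<rho> \<le> \<sigma>" "\<And>v. v \<le> \<sigma> \<Longrightarrow> 0 \<le> c v" "Q \<le> c \<rho>" "0 \<le> t"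
  shows "Q * t ^ \<rho> \<le> (\<Sum>v=0..\<sigma>. c v * t ^ v)"
proof -
  have "Q * t ^ \<rho> \<le> c \<rho> * t ^ \<rho>"
    using assms(3,4) by (simp add: mult_right_mono)
  also have "\<dots> \<le> (\<Sum>v=0..\<sigma>. c v * t ^ v)"
  proof (rule member_le_sum)
    show "0 \<le> c v * t ^ v" if "v \<in> {0..\<sigma>} - {\<rho>}" for v
      using that assms(2,4) by simp
  qed (use assms(1) in simp_all)
  finally show ?thesis .
qed

locale bipolar_metric =
  fixes E P :: "'a set" and d :: "'a \<Rightarrow> 'a \<Rightarrow> real"
  assumes bipolar_metric_space: "bipolar_metric_space E P d"
begin

lemma nonempty: "E \<noteq> {}" "P \<noteq> {}"
  using bipolar_metric_space unfolding bipolar_metric_space_def by auto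

lemma dist_nonneg: "e \<in> E \<Longrightarrow> f \<in> P \<Longrightarrow> 0 \<le> d e f"
  using bipolar_metric_space unfolding bipolar_metric_space_def by auto

lemma dist_eq_0_iff: "e \<in> E \<Longrightarrow> f \<in> P \<Longrightarrow> d e f = 0 \<longleftrightarrow> e = f"
  using bipolar_metric_space unfolding bipolar_metric_space_def by auto

lemma dist_quadrangle:
  "e \<in> E \<Longrightarrow> r \<in> E \<Longrightarrow> z \<in> P \<Longrightarrow> f \<in> P \<Longrightarrow> d e f \<le> d e z + d r z + d r f"
  using bipolar_metric_space unfolding bipolar_metric_space_def by auto

lemma eq_if_dist_le_tendsto_zero:
  assumes "e \<in> E" "f \<in> P" "\<And>n. d e f \<le> t n" "t \<longlonglongrightarrow> 0"
  shows "e = f"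
proof -
  have "d e f \<le> 0"
    by (rule LIMSEQ_le_const[OF assms(4)]) (use assms(3) in blast)
  then have "d e f = 0"
    using dist_nonneg[OF assms(1,2)] by linarith
  then show ?thesis
    using dist_eq_0_iff[OF assms(1,2)] by blast
qed

lemma dist_le_diagonal_sum_right:
  assumes x: "\<And>k. x k \<in> E" and y: "\<And>k. y k \<in> P" and "n \<le> m"
  shows "d (x n) (y m) \<le> (\<Sum>k=n..m. d (x k) (y k)) + (\<Sum>k=n..<m. d (x (Suc k)) (y k))"
  using \<open>n \<le> m\<close>
proof (induction m rule: dec_induct)
  case base
  then show ?case by simp
next
  case (step m)
  have "d (x n) (y (Suc m)) \<le> d (x n) (y m) + d (x (Suc m)) (y m) + d (x (Suc m)) (y (Suc m))"
    using x y by (intro dist_quadrangle)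
  with step show ?case by simp
qed

lemma dist_le_diagonal_sum_left:
  assumes x: "\<And>k. x k \<in> E" and y: "\<And>k. y k \<in> P" and "n \<le> m"
  shows "d (x m) (y n) \<le> (\<Sum>k=n..m. d (x k) (y k)) + (\<Sum>k=n..<m. d (x k) (y (Suc k)))"
  using \<open>n \<le> m\<close>
proof (induction m rule: dec_induct)
  case base
  then show ?case by simp
next
  case (step m)
  have "d (x (Suc m)) (y n) \<le> d (x (Suc m)) (y (Suc m)) + d (x m) (y (Suc m)) + d (x m) (y n)"
    using x y by (intro dist_quadrangle)
  with step show ?case by simp
qed

lemma bp_cauchy_if_summable_steps:
  assumes x: "\<And>k. x k \<in> E" and y: "\<And>k. y k \<in> P"
    and "summable (\<lambda>k. d (x k) (y k))" "summable (\<lambda>k. d (x (Suc k)) (y k))"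
      "summable (\<lambda>k. d (x k) (y (Suc k)))"
  shows "bp_cauchy d x y"
proof -
  define s where "s k = d (x k) (y k) + d (x (Suc k)) (y k) + d (x k) (y (Suc k))" for k
  have steps_le_s: "d (x k) (y k) \<le> s k" "d (x (Suc k)) (y k) \<le> s k" "d (x k) (y (Suc k)) \<le> s k"
    for k unfolding s_def using x y dist_nonneg by (simp_all add: add_nonneg_nonneg)
  have s_nonneg: "0 \<le> s k" for k
    unfolding s_def using x y by (intro add_nonneg_nonneg dist_nonneg)
  have "summable s"
    unfolding s_def using assms(3-5) by (intro summable_add)
  have dist_le_tail: "d (x n) (y m) \<le> 2 * (\<Sum>i. s (i + min n m))" for n m
  proof -
    let ?l = "min n m" and ?u = "max n m"
    have "d (x n) (y m) \<le> (\<Sum>k=?l..?u. s k) + (\<Sum>k=?l..<?u. s k)"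
    proof (cases "n \<le> m")
      case True
      have "d (x n) (y m) \<le> (\<Sum>k=n..m. d (x k) (y k)) + (\<Sum>k=n..<m. d (x (Suc k)) (y k))"
        using x y True by (rule dist_le_diagonal_sum_right)
      also have "\<dots> \<le> (\<Sum>k=n..m. s k) + (\<Sum>k=n..<m. s k)"
        by (intro add_mono sum_mono steps_le_s)
      finally show ?thesis
        using True by (simp add: min_def max_def)
    next
      case False
      then have "m \<le> n" by simp
      have "d (x n) (y m) \<le> (\<Sum>k=m..n. d (x k) (y k)) + (\<Sum>k=m..<n. d (x k) (y (Suc k)))"
        using x y \<open>m \<le> n\<close> by (rule dist_le_diagonal_sum_left)
      also have "\<dots> \<le> (\<Sum>k=m..n. s k) + (\<Sum>k=m..<n. s k)"
        by (intro add_mono sum_mono steps_le_s)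
      finally show ?thesis
        using False by (simp add: min_def max_def)
    qed
    also have "\<dots> = (\<Sum>k=?l..<Suc ?u. s k) + (\<Sum>k=?l..<?u. s k)"
      by (simp add: atLeastLessThanSuc_atLeastAtMost)
    also have "\<dots> \<le> (\<Sum>i. s (i + ?l)) + (\<Sum>i. s (i + ?l))"
      using \<open>summable s\<close> s_nonneg by (intro add_mono sum_ivl_le_suminf_tail)
    finally show ?thesis by simp
  qed
  show ?thesis
    unfolding bp_cauchy_def
  proof (intro allI impI)
    fix \<epsilon> :: real
    assume "\<epsilon> > 0"
    then obtain N where N: "\<And>n. n \<ge> N \<Longrightarrow> norm (\<Sum>i. s (i + n)) < \<epsilon> / 2"
      using suminf_exist_split[of "\<epsilon> / 2" s] \<open>summable s\<close> by auto
    have "d (x n) (y m) < \<epsilon>" if "n \<ge> N" "m \<ge> N" for n m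
      using dist_le_tail[of n m] N[of "min n m"] that by simp
    then show "\<exists>N. \<forall>n\<ge>N. \<forall>m\<ge>N. d (x n) (y m) < \<epsilon>"
      by blast
  qed
qed

lemma fixed_point_if_summable_steps:
  assumes compl: "bp_complete E P d" and FE: "F ` E \<subseteq> E" and FP: "F ` P \<subseteq> P"
    and picard: "picard_continuous E P d F" and "g \<in> E" "h \<in> P"
    and "summable (\<lambda>n. d ((F ^^ n) g) ((F ^^ n) h))"
      "summable (\<lambda>n. d ((F ^^ Suc n) g) ((F ^^ n) h))"
      "summable (\<lambda>n. d ((F ^^ n) g) ((F ^^ Suc n) h))"
  shows "\<exists>u \<in> E \<inter> P. F u = u"
proof -
  define x where "x n = (F ^^ n) g" for n
  define y where "y n = (F ^^ n) h" for n
  have x: "x n \<in> E" and y: "y n \<in> P" for n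
    unfolding x_def y_def using funpow_in_invariant FE FP \<open>g \<in> E\<close> \<open>h \<in> P\<close> by auto
  have steps: "summable (\<lambda>n. d (x n) (y n))" "summable (\<lambda>n. d (x (Suc n)) (y n))"
    "summable (\<lambda>n. d (x n) (y (Suc n)))"
    unfolding x_def y_def using assms(7-9) by simp_all
  then have "bp_cauchy d x y"
    using x y by (intro bp_cauchy_if_summable_steps)
  then obtain u v where "u \<in> E" "v \<in> P" and x_to_v: "(\<lambda>n. d (x n) v) \<longlonglongrightarrow> 0"
    and y_to_u: "(\<lambda>n. d u (y n)) \<longlonglongrightarrow> 0"
    using compl x y
    unfolding bp_complete_def bp_convergent_biseq_def bp_conv_left_def bp_conv_right_def
    by blast
  have "u = v"
  proof (rule eq_if_dist_le_tendsto_zero[OF \<open>u \<in> E\<close> \<open>v \<in> P\<close>])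
    show "d u v \<le> d u (y n) + d (x n) (y n) + d (x n) v" for n
      using \<open>u \<in> E\<close> \<open>v \<in> P\<close> x y by (intro dist_quadrangle)
    show "(\<lambda>n. d u (y n) + d (x n) (y n) + d (x n) v) \<longlonglongrightarrow> 0"
      using tendsto_add[OF tendsto_add[OF y_to_u summable_LIMSEQ_zero[OF steps(1)]] x_to_v]
      by simp
  qed
  with \<open>v \<in> P\<close> have "u \<in> P" by simp
  have "(\<lambda>n. d (x (Suc n)) (F u)) \<longlonglongrightarrow> 0"
    using picard \<open>g \<in> E\<close> \<open>u \<in> P\<close> x_to_v \<open>u = v\<close>
    unfolding picard_continuous_def x_def by simp
  moreover have "F u \<in> P"
    using FP \<open>u \<in> P\<close> by blast
  ultimately have "u = F u"
  proof (intro eq_if_dist_le_tendsto_zero[OF \<open>u \<in> E\<close>])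
    show "d u (F u) \<le> d u (y n) + d (x (Suc n)) (y n) + d (x (Suc n)) (F u)" for n
      using \<open>u \<in> E\<close> \<open>F u \<in> P\<close> x y by (intro dist_quadrangle)
    show "(\<lambda>n. d u (y n) + d (x (Suc n)) (y n) + d (x (Suc n)) (F u)) \<longlonglongrightarrow> 0"
      if "(\<lambda>n. d (x (Suc n)) (F u)) \<longlonglongrightarrow> 0"
      using tendsto_add[OF tendsto_add[OF y_to_u summable_LIMSEQ_zero[OF steps(2)]] that]
      by simp
  qed
  with \<open>u \<in> E\<close> \<open>u \<in> P\<close> show ?thesis by (metis IntI)
qed

lemma summable_dist_iterates_if_contractive:
  fixes S :: "'a \<Rightarrow> 'a \<Rightarrow> real"
  assumes FE: "F ` E \<subseteq> E" and FP: "F ` P \<subseteq> P"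
    and "0 \<le> \<pi>" "\<pi> < 1" "0 < Q" "0 < \<rho>"
    and lower: "\<And>e f. e \<in> E \<Longrightarrow> f \<in> P \<Longrightarrow> Q * d e f ^ \<rho> \<le> S e f"
    and contr: "\<And>e f. e \<in> E \<Longrightarrow> f \<in> P \<Longrightarrow> S (F e) (F f) \<le> \<pi> * S e f"
    and "e \<in> E" "f \<in> P"
  shows "summable (\<lambda>k. d ((F ^^ k) e) ((F ^^ k) f))"
proof -
  have iter: "(F ^^ k) e \<in> E" "(F ^^ k) f \<in> P" for k
    using FE FP \<open>e \<in> E\<close> \<open>f \<in> P\<close> by (simp_all add: funpow_in_invariant)
  have decay: "S ((F ^^ k) e) ((F ^^ k) f) \<le> \<pi> ^ k * S e f" for k
  proof (induction k)
    case 0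
    then show ?case by simp
  next
    case (Suc k)
    have "S ((F ^^ Suc k) e) ((F ^^ Suc k) f) \<le> \<pi> * S ((F ^^ k) e) ((F ^^ k) f)"
      using contr iter by simp
    also have "\<dots> \<le> \<pi> * (\<pi> ^ k * S e f)"
      using Suc \<open>0 \<le> \<pi>\<close> by (rule mult_left_mono)
    finally show ?case by simp
  qed
  have dist_le: "d ((F ^^ k) e) ((F ^^ k) f) \<le> root \<rho> (S e f / Q) * root \<rho> \<pi> ^ k" for k
  proof -
    let ?d = "d ((F ^^ k) e) ((F ^^ k) f)"
    have "Q * ?d ^ \<rho> \<le> \<pi> ^ k * S e f"
      by (rule order_trans[OF lower[OF iter] decay])
    then have "?d ^ \<rho> \<le> \<pi> ^ k * (S e f / Q)"
      using \<open>0 < Q\<close> by (simp add: field_simps)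
    then have "root \<rho> (?d ^ \<rho>) \<le> root \<rho> (\<pi> ^ k * (S e f / Q))"
      by (rule real_root_le_mono[OF \<open>0 < \<rho>\<close>])
    moreover have "root \<rho> (?d ^ \<rho>) = ?d"
      using \<open>0 < \<rho>\<close> dist_nonneg[OF iter] by (rule real_root_power_cancel)
    moreover have "root \<rho> (\<pi> ^ k * (S e f / Q)) = root \<rho> (S e f / Q) * root \<rho> \<pi> ^ k"
      unfolding real_root_mult real_root_power[OF \<open>0 < \<rho>\<close>] by (rule mult.commute)
    ultimately show ?thesis by simp
  qed
  have "summable (\<lambda>k. root \<rho> (S e f / Q) * root \<rho> \<pi> ^ k)"
    using assms(3,4,6) by (intro summable_mult summable_geometric) simp
  then show ?thesis
    by (rule summable_comparison_test'[where N = 0]) (simp add: dist_le dist_nonneg[OF iter])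
qed


lemma fixed_points_eq_if_summable_iterates:
  assumes "e \<in> E" "f \<in> P" "F e = e" "F f = f"
    and "summable (\<lambda>k. d ((F ^^ k) e) ((F ^^ k) f))"
  shows "e = f"
proof -
  have "(F ^^ k) e = e" "(F ^^ k) f = f" for k
    using assms(3,4) by (induction k) simp_all
  then have "(\<lambda>k. d e f) \<longlonglongrightarrow> 0"
    using summable_LIMSEQ_zero[OF assms(5)] by simp
  then show ?thesis
    using assms(1,2) dist_eq_0_iff LIMSEQ_const_iff by blast
qed

theorem unique_fixed_point_if_summable_iterates:
  assumes compl: "bp_complete E P d" and FE: "F ` E \<subseteq> E" and FP: "F ` P \<subseteq> P"
    and picard: "picard_continuous E P d F"
    and summable: "\<And>e f. e \<in> E \<Longrightarrow> f \<in> P \<Longrightarrow> summable (\<lambda>k. d ((F ^^ k) e) ((F ^^ k) f))"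
  shows "\<exists>!u. u \<in> E \<union> P \<and> F u = u"
proof -
  obtain g h where g: "g \<in> E" and h: "h \<in> P"
    using nonempty by blast
  have "summable (\<lambda>n. d ((F ^^ Suc n) g) ((F ^^ n) h))"
    using summable[of "F g" h] FE g h by (simp add: funpow_swap1 image_subset_iff)
  moreover have "summable (\<lambda>n. d ((F ^^ n) g) ((F ^^ Suc n) h))"
    using summable[of g "F h"] FP g h by (simp add: funpow_swap1 image_subset_iff)
  ultimately obtain u where u: "u \<in> E \<inter> P" "F u = u"
    using fixed_point_if_summable_steps[OF compl FE FP picard g h summable[OF g h]]
    by blast
  show ?thesis
  proof (rule ex1I[of _ u])
    show "u \<in> E \<union> P \<and> F u = u"
      using u by blast
    fix w
    assume w: "w \<in> E \<union> P \<and> F w = w"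
    show "w = u"
    proof (cases "w \<in> E")
      case True
      show ?thesis
        by (rule fixed_points_eq_if_summable_iterates[where F = F]) (use True w u summable in auto)
    next
      case False
      with w have "w \<in> P" by blast
      have "u = w"
        by (rule fixed_points_eq_if_summable_iterates[where F = F]) (use \<open>w \<in> P\<close> w u summable in auto)
      then show ?thesis ..
    qed
  qed
qed

end

theorem theorem3p11:
  fixes E P :: "'a set" and d :: "'a \<Rightarrow> 'a \<Rightarrow> real" and F :: "'a \<Rightarrow> 'a"
    and \<pi> :: real and \<sigma> :: nat and q :: "nat \<Rightarrow> 'a \<Rightarrow> 'a \<Rightarrow> real"
    and \<rho> :: nat and Q :: real
  assumes bms: "bipolar_metric_space E P d"
    and compl: "bp_complete E P d"
    and FE: "F ` E \<subseteq> E" and FP: "F ` P \<subseteq> P"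
    and pi: "0 < \<pi>" "\<pi> < 1"
    and sigma: "\<sigma> \<ge> 1"
    and q_nonneg: "\<And>v e f. v \<le> \<sigma> \<Longrightarrow> e \<in> E \<Longrightarrow> f \<in> P \<Longrightarrow> q v e f \<ge> 0"
    and contr: "\<And>e f. e \<in> E \<Longrightarrow> f \<in> P \<Longrightarrow>
        (\<Sum>v=0..\<sigma>. q v (F e) (F f) * d (F e) (F f) ^ v) \<le> \<pi> * (\<Sum>v=0..\<sigma>. q v e f * d e f ^ v)"
    and picard: "picard_continuous E P d F"
    and rho: "1 \<le> \<rho>" "\<rho> \<le> \<sigma>" and Qpos: "Q > 0"
    and qrho: "\<And>e f. e \<in> E \<Longrightarrow> f \<in> P \<Longrightarrow> q \<rho> e f \<ge> Q"
  shows "\<exists>!g. g \<in> E \<union> P \<and> F g = g"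
proof -
  interpret bipolar_metric E P d
    using bms by (rule bipolar_metric.intro)
  show ?thesis
  proof (rule unique_fixed_point_if_summable_iterates[OF compl FE FP picard])
    show "summable (\<lambda>k. d ((F ^^ k) e) ((F ^^ k) f))" if "e \<in> E" "f \<in> P" for e f
    proof (rule summable_dist_iterates_if_contractive
        [where S = "\<lambda>e f. \<Sum>v=0..\<sigma>. q v e f * d e f ^ v", OF FE FP _ pi(2) Qpos _ _ contr that])
      show "Q * d e f ^ \<rho> \<le> (\<Sum>v=0..\<sigma>. q v e f * d e f ^ v)" if "e \<in> E" "f \<in> P" for e f
        using rho q_nonneg qrho dist_nonneg that by (intro coeff_mult_power_le_sum) auto
    qed (use pi rho in auto)
  qed
qed

end
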